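(* For every 2-coloring of the edges of $K_\mathbb{N}$ there exist a set $A\subseteq\mathbb{N}$, a vertex $v\in A$ and a color $c$ such that, letting $F$ be the graph on $A$ consisting of all edges of color $c$ inside $A$, every vertex of $F$ has infinite degree in $F$ and $\overline{d}(N_F(v))\ge 1/2$.
   Context: $K_{\mathbb{N}}$ is the complete graph on $\mathbb{N}=\{1,2,\dots\}$. $\overline{d}(V)=\limsup_{t\to\infty}|V\cap\{1,\dots,t\}|/t$. $N_F(v)$ is the set of neighbors of $v$ in $F$. *)

theory Defs
  imports "HOL-Library.Liminf_Limsup" "HOL-Library.Extended_Real"
begin

definition upper_density :: "nat set \<Rightarrow> ereal" where
  "upper_density V = limsup (\<lambda>t. ereal (real (card (V \<inter> {1..t})) / real t))"

text \<open>Neighbourhood of v in the graph F on vertex set A whose edges are the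
  edges of K_N inside A having colour col under the edge colouring c.\<close>
definition colour_nbhd :: "(nat set \<Rightarrow> bool) \<Rightarrow> bool \<Rightarrow> nat set \<Rightarrow> nat \<Rightarrow> nat set" where
  "colour_nbhd c col A v = {u \<in> A. u \<noteq> v \<and> c {u, v} = col}"

end

theory Submission
  imports Defs "HOL-Analysis.Extended_Real_Limits" "HOL-Library.Ramsey"
begin

text \<open>For each colour, the union of all vertex sets on which that colour class has infinite
  minimum degree is again such a set, its core. An infinite set outside both cores would contain
  an infinite monochromatic set by Ramsey's theorem, which lies in a core; so all but finitely
  many vertices lie in a core, and by subadditivity of upper density some core has upper density
  at least 1/2. Adding to it a vertex with only finitely many neighbours of the other colour
  gives the required vertex. If no such vertex exists, the other colour class has infinite
  minimum degree on all vertices, and either some vertex has cofinitely many neighbours in it, or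
  both colour classes have infinite minimum degree everywhere and one of the two neighbourhoods
  of any vertex has upper density at least 1/2.\<close>

lemma upper_density_nonneg: "0 \<le> upper_density S"
  unfolding upper_density_def by (rule le_Limsup) auto

lemma upper_density_mono:
  assumes "S \<subseteq> T"
  shows "upper_density S \<le> upper_density T"
  unfolding upper_density_def
proof (rule Limsup_mono, rule always_eventually, rule allI)
  fix t
  have "card (S \<inter> {1..t}) \<le> card (T \<inter> {1..t})"
    using assms by (intro card_mono) auto
  then show "ereal (real (card (S \<inter> {1..t})) / real t) \<le> ereal (real (card (T \<inter> {1..t})) / real t)"
    by (simp add: divide_right_mono)
qed

lemma upper_density_Un: "upper_density (S \<union> T) \<le> upper_density S + upper_density T"
proof -
  let ?r = "\<lambda>V t. ereal (real (card (V \<inter> {1..t})) / real t)"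
  have "upper_density (S \<union> T) \<le> limsup (\<lambda>t. ?r S t + ?r T t)"
    unfolding upper_density_def
  proof (rule Limsup_mono, rule always_eventually, rule allI)
    fix t
    have "card ((S \<union> T) \<inter> {1..t}) \<le> card (S \<inter> {1..t}) + card (T \<inter> {1..t})"
      by (metis Int_Un_distrib2 card_Un_le)
    then show "?r (S \<union> T) t \<le> ?r S t + ?r T t"
      by (simp add: divide_right_mono add_divide_distrib[symmetric])
  qed
  also have "\<dots> \<le> upper_density S + upper_density T"
    unfolding upper_density_def by (rule ereal_limsup_add_mono)
  finally show ?thesis .
qed

lemma upper_density_finite:
  assumes "finite F"
  shows "upper_density F = 0"
proof (rule antisym[OF _ upper_density_nonneg])
  have "upper_density F \<le> limsup (\<lambda>t. ereal (real (card F) / real t))"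
    unfolding upper_density_def
  proof (rule Limsup_mono, rule always_eventually, rule allI)
    fix t
    have "card (F \<inter> {1..t}) \<le> card F"
      using assms by (intro card_mono) auto
    then show "ereal (real (card (F \<inter> {1..t})) / real t) \<le> ereal (real (card F) / real t)"
      by (simp add: divide_right_mono)
  qed
  also have "\<dots> = 0"
    using lim_const_over_n[of "real (card F)"]
    by (intro lim_imp_Limsup) (simp_all add: zero_ereal_def tendsto_ereal)
  finally show "upper_density F \<le> 0" .
qed

lemma upper_density_Diff_finite:
  assumes "finite F"
  shows "upper_density S \<le> upper_density (S - F)"
proof -
  have "upper_density S \<le> upper_density ((S - F) \<union> F)"
    by (rule upper_density_mono) auto
  also have "\<dots> \<le> upper_density (S - F) + upper_density F"
    by (rule upper_density_Un)
  finally show ?thesis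
    using upper_density_finite[OF assms] by simp
qed

lemma upper_density_positive_integers: "1 \<le> upper_density {1..}"
  unfolding upper_density_def
proof (rule le_Limsup)
  show "\<forall>\<^sub>F t in sequentially. 1 \<le> ereal (real (card ({1..} \<inter> {1..t})) / real t)"
    using eventually_ge_at_top[of "1::nat"]
    by eventually_elim (simp add: Int_absorb1)
qed simp

lemma infinite_if_upper_density_pos:
  assumes "0 < upper_density S"
  shows "infinite S"
  using assms upper_density_finite by force

lemma ereal_half_le_summand:
  fixes a b :: ereal
  assumes "0 \<le> a" "0 \<le> b" "1 \<le> a + b"
  shows "1/2 \<le> a \<or> 1/2 \<le> b"
proof -
  have "(1/2::ereal) = ereal (1/2)"
    by (simp add: one_ereal_def)
  then show ?thesis
    using assms by (cases a; cases b) auto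
qed

lemma upper_density_Un_half:
  assumes "1 \<le> upper_density (S \<union> T)"
  shows "1/2 \<le> upper_density S \<or> 1/2 \<le> upper_density T"
  using assms upper_density_Un order_trans
  by (intro ereal_half_le_summand upper_density_nonneg) blast

definition infinite_min_degree :: "(nat set \<Rightarrow> bool) \<Rightarrow> bool \<Rightarrow> nat set \<Rightarrow> bool" where
  "infinite_min_degree c col A \<longleftrightarrow> A \<subseteq> {1..} \<and> (\<forall>x\<in>A. infinite (colour_nbhd c col A x))"

definition infinite_min_degree_core :: "(nat set \<Rightarrow> bool) \<Rightarrow> bool \<Rightarrow> nat set" where
  "infinite_min_degree_core c col = \<Union>{A. infinite_min_degree c col A}"

lemma colour_nbhd_mono: "A \<subseteq> B \<Longrightarrow> colour_nbhd c col A x \<subseteq> colour_nbhd c col B x"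
  unfolding colour_nbhd_def by auto

lemma not_infinite_min_degree_positive_integers:
  "\<not> infinite_min_degree c col {1..} \<longleftrightarrow> (\<exists>x\<in>{1..}. finite (colour_nbhd c col {1..} x))"
  unfolding infinite_min_degree_def by auto

lemma subset_infinite_min_degree_core:
  "infinite_min_degree c col A \<Longrightarrow> A \<subseteq> infinite_min_degree_core c col"
  unfolding infinite_min_degree_core_def by auto

lemma infinite_min_degree_core: "infinite_min_degree c col (infinite_min_degree_core c col)"
  unfolding infinite_min_degree_def
proof (intro conjI ballI)
  show "infinite_min_degree_core c col \<subseteq> {1..}"
    unfolding infinite_min_degree_core_def infinite_min_degree_def by auto
next
  fix x assume "x \<in> infinite_min_degree_core c col"
  then obtain A where A: "infinite_min_degree c col A" "x \<in> A"
    unfolding infinite_min_degree_core_def by blast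
  then have "infinite (colour_nbhd c col A x)"
    unfolding infinite_min_degree_def by blast
  then show "infinite (colour_nbhd c col (infinite_min_degree_core c col) x)"
    by (rule infinite_super[OF colour_nbhd_mono[OF subset_infinite_min_degree_core[OF A(1)]]])
qed

lemma infinite_min_degree_homogeneous:
  assumes "A \<subseteq> {1..}" "infinite A" "\<And>x y. x \<in> A \<Longrightarrow> y \<in> A \<Longrightarrow> x \<noteq> y \<Longrightarrow> c {x, y} = col"
  shows "infinite_min_degree c col A"
proof -
  have "colour_nbhd c col A x = A - {x}" if "x \<in> A" for x
    using assms(3) that unfolding colour_nbhd_def by auto
  then show ?thesis
    using assms(1,2) unfolding infinite_min_degree_def by auto
qed

lemma finite_outside_infinite_min_degree_cores:
  "finite ({1..} - (infinite_min_degree_core c True \<union> infinite_min_degree_core c False))"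
    (is "finite ?Z")
proof (rule ccontr)
  assume "infinite ?Z"
  then have "\<exists>Y t. Y \<subseteq> ?Z \<and> infinite Y \<and> t < (2::nat) \<and>
      (\<forall>x\<in>Y. \<forall>y\<in>Y. x \<noteq> y \<longrightarrow> (if c {x, y} then 1 else 0) = t)"
    by (rule Ramsey2) simp
  then obtain Y and t :: nat where Y: "Y \<subseteq> ?Z" "infinite Y"
    "\<forall>x\<in>Y. \<forall>y\<in>Y. x \<noteq> y \<longrightarrow> (if c {x, y} then 1 else 0) = t"
    by blast
  have "c {x, y} = (t = 1)" if "x \<in> Y" "y \<in> Y" "x \<noteq> y" for x y
    using Y(3) that by (metis zero_neq_one)
  then have "infinite_min_degree c (t = 1) Y"
    using Y(1,2) by (intro infinite_min_degree_homogeneous) auto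
  then have "Y \<subseteq> infinite_min_degree_core c (t = 1)"
    by (rule subset_infinite_min_degree_core)
  moreover obtain y where "y \<in> Y"
    using Y(2) by (metis finite.emptyI ex_in_conv)
  ultimately show False
    using Y(1) by (cases "t = 1") auto
qed

lemma upper_density_infinite_min_degree_core:
  "\<exists>col. 1/2 \<le> upper_density (infinite_min_degree_core c col)"
proof -
  let ?K = "infinite_min_degree_core c True \<union> infinite_min_degree_core c False"
  let ?Z = "{1..} - ?K"
  have "1 \<le> upper_density {1..}"
    by (rule upper_density_positive_integers)
  also have "\<dots> \<le> upper_density ({1..} - ?Z)"
    by (rule upper_density_Diff_finite[OF finite_outside_infinite_min_degree_cores])
  also have "\<dots> \<le> upper_density ?K"
    by (rule upper_density_mono) auto
  finally have "1 \<le> upper_density ?K" .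
  from upper_density_Un_half[OF this] show ?thesis by blast
qed

lemma infinite_min_degree_insert_cofinite_vertex:
  assumes A: "infinite_min_degree c col A" and "1/2 \<le> upper_density A"
    and x: "x \<in> {1..}" "finite (colour_nbhd c (\<not> col) {1..} x)"
  shows "infinite_min_degree c col (insert x A)"
    and "1/2 \<le> upper_density (colour_nbhd c col (insert x A) x)"
proof -
  let ?F = "insert x (colour_nbhd c (\<not> col) {1..} x)"
  have "A \<subseteq> {1..}"
    using A unfolding infinite_min_degree_def by blast
  then have sub: "A - ?F \<subseteq> colour_nbhd c col (insert x A) x"
    unfolding colour_nbhd_def by auto
  have "finite ?F"
    using x(2) by simp
  have "1/2 \<le> upper_density A" by fact
  also have "\<dots> \<le> upper_density (A - ?F)"
    by (rule upper_density_Diff_finite[OF \<open>finite ?F\<close>])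
  also have "\<dots> \<le> upper_density (colour_nbhd c col (insert x A) x)"
    by (rule upper_density_mono[OF sub])
  finally show dense: "1/2 \<le> upper_density (colour_nbhd c col (insert x A) x)" .
  have "infinite (colour_nbhd c col (insert x A) x)"
    by (rule infinite_if_upper_density_pos, rule order.strict_trans2[OF _ dense])
      (simp add: one_ereal_def)
  moreover have "infinite (colour_nbhd c col (insert x A) y)" if "y \<in> A" for y
  proof (rule infinite_super[OF colour_nbhd_mono])
    show "infinite (colour_nbhd c col A y)"
      using A that unfolding infinite_min_degree_def by blast
  qed auto
  ultimately show "infinite_min_degree c col (insert x A)"
    using \<open>A \<subseteq> {1..}\<close> x(1) unfolding infinite_min_degree_def by auto
qed

lemma upper_density_colour_nbhd_positive_integers:
  assumes "v \<in> {1..}"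
  shows "\<exists>col. 1/2 \<le> upper_density (colour_nbhd c col {1..} v)"
proof -
  have "1 \<le> upper_density {1..}"
    by (rule upper_density_positive_integers)
  also have "\<dots> \<le> upper_density ({1..} - {v})"
    by (rule upper_density_Diff_finite) simp
  also have "\<dots> \<le> upper_density (colour_nbhd c True {1..} v \<union> colour_nbhd c False {1..} v)"
    by (rule upper_density_mono) (auto simp: colour_nbhd_def)
  finally have "1 \<le> upper_density (colour_nbhd c True {1..} v \<union> colour_nbhd c False {1..} v)" .
  from upper_density_Un_half[OF this] show ?thesis by blast
qed

theorem mainTheorem14:
  fixes c :: "nat set \<Rightarrow> bool"
  shows "\<exists>A v col. A \<subseteq> {1..} \<and> v \<in> A \<and>
           (\<forall>x\<in>A. infinite (colour_nbhd c col A x)) \<and>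
           upper_density (colour_nbhd c col A v) \<ge> 1/2"
proof -
  obtain col where core: "1/2 \<le> upper_density (infinite_min_degree_core c col)"
    using upper_density_infinite_min_degree_core by blast
  have "\<exists>A v col. infinite_min_degree c col A \<and> v \<in> A \<and>
          1/2 \<le> upper_density (colour_nbhd c col A v)"
  proof (cases "infinite_min_degree c (\<not> col) {1..}")
    case False
    then obtain x where "x \<in> {1..}" "finite (colour_nbhd c (\<not> col) {1..} x)"
      using not_infinite_min_degree_positive_integers by blast
    then show ?thesis
      using infinite_min_degree_insert_cofinite_vertex[OF infinite_min_degree_core core] by blast
  next
    case other: True
    show ?thesis
    proof (cases "infinite_min_degree c col {1..}")
      case False
      then obtain x where "x \<in> {1..}" "finite (colour_nbhd c (\<not> \<not> col) {1..} x)"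
        using not_infinite_min_degree_positive_integers by auto
      moreover have "1/2 \<le> upper_density {1::nat..}"
        by (rule order_trans[OF _ upper_density_positive_integers]) (simp add: one_ereal_def)
      ultimately show ?thesis
        using infinite_min_degree_insert_cofinite_vertex[OF other] by (metis insert_absorb)
    next
      case True
      with other have "infinite_min_degree c col' {1..}" for col'
        by (cases "col' = col") auto
      then show ?thesis
        using upper_density_colour_nbhd_positive_integers[of 1 c] by blast
    qed
  qed
  then show ?thesis
    unfolding infinite_min_degree_def by blast
qed

end
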